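(* Consider the nonlinear program described in the context and let $\alpha>0$. If MFCQ holds at $x^*\in\mathcal{C}$, then (i) $\mathcal{G}_\alpha(x^* )=0$ if and only if $x^*\in X_{KKT}$; and (ii) if $x^*\in X_{KKT}$, then $\Lambda_\alpha(x^* )$ equals the set of Lagrange multipliers of the program at $x^*$.
   Context: Let $f:\mathbb{R}^n\to\mathbb{R}$, $g:\mathbb{R}^n\to\mathbb{R}^m$, $h:\mathbb{R}^n\to\mathbb{R}^k$ be continuously differentiable; consider minimize $f(x)$ subject to $g(x)\le0$, $h(x)=0$ with feasible set $\mathcal{C}$; $I_0(x)=\{i:g_i(x)=0\}$. MFCQ at $x$: $\{\nabla h_j(x)\}_{j=1}^k$ linearly independent and some $\xi$ has $\nabla h_j(x)^\top\xi=0$ for all $j$ and $\nabla g_i(x)^\top\xi<0$ for $i\in I_0(x)$. $(u^*,v^* )\in\mathbb{R}^m\times\mathbb{R}^k$ are Lagrange multipliers at $x^*$ if $\nabla f(x^* )+\frac{\partial g}{\partial x}(x^* )^\top u^*+\frac{\partial h}{\partial x}(x^* )^\top v^*=0$, $g(x^* )\le0$, $h(x^* )=0$, $u^*\ge0$, $(u^* )^\top g(x^* )=0$; $X_{KKT}$ is the set of points admitting Lagrange multipliers. With $G=\frac{\partial g}{\partial x}(x)$, $H=\frac{\partial h}{\partial x}(x)$: $\mathcal{G}_\alpha(x)$ is the unique minimizer over $\xi$ of $\frac12\|\xi+\nabla f(x)\|^2$ subject to $G\xi\le-\alpha g(x)$, $H\xi=-\alpha h(x)$; $\Lambda_\alpha(x)$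 is the set of $(u,v)\in\mathbb{R}^m_{\ge0}\times\mathbb{R}^k$ for which some $\xi$ satisfies $\xi+\nabla f(x)+G^\top u+H^\top v=0$, $G\xi+\alpha g(x)\le0$, $H\xi+\alpha h(x)=0$, $u\ge0$, $u^\top(G\xi+\alpha g(x))=0$. *)

theory Defs
  imports "HOL-Analysis.Analysis"
begin

(* Constraint functions are indexed by natural numbers below m resp. k
   (so m = 0 or k = 0 is allowed).  df x is the gradient of f at x,
   dg x i the gradient of g_i at x (i-th row of dg/dx), dh x j likewise.
   Multiplier vectors u in R^m, v in R^k are represented by functions
   nat => real that vanish outside {..<m} resp. {..<k}. *)

definition feasible_set ::
  "('a::euclidean_space \<Rightarrow> nat \<Rightarrow> real) \<Rightarrow> nat \<Rightarrow> ('a \<Rightarrow> nat \<Rightarrow> real) \<Rightarrow> nat \<Rightarrow> 'a set" where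
  "feasible_set g m h k = {x. (\<forall>i<m. g x i \<le> 0) \<and> (\<forall>j<k. h x j = 0)}"

definition active_set :: "('a \<Rightarrow> nat \<Rightarrow> real) \<Rightarrow> nat \<Rightarrow> 'a \<Rightarrow> nat set" where
  "active_set g m x = {i. i < m \<and> g x i = 0}"

definition MFCQ ::
  "('a::euclidean_space \<Rightarrow> nat \<Rightarrow> real) \<Rightarrow> ('a \<Rightarrow> nat \<Rightarrow> 'a) \<Rightarrow> nat \<Rightarrow>
   ('a \<Rightarrow> nat \<Rightarrow> 'a) \<Rightarrow> nat \<Rightarrow> 'a \<Rightarrow> bool" where
  "MFCQ g dg m dh k x \<longleftrightarrow>
     (\<forall>c::nat \<Rightarrow> real. (\<Sum>j<k. c j *\<^sub>R dh x j) = 0 \<longrightarrow> (\<forall>j<k. c j = 0)) \<and>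
     (\<exists>\<xi>. (\<forall>j<k. dh x j \<bullet> \<xi> = 0) \<and> (\<forall>i\<in>active_set g m x. dg x i \<bullet> \<xi> < 0))"

definition lagrange_multipliers ::
  "('a::euclidean_space \<Rightarrow> 'a) \<Rightarrow> ('a \<Rightarrow> nat \<Rightarrow> real) \<Rightarrow> ('a \<Rightarrow> nat \<Rightarrow> 'a) \<Rightarrow> nat \<Rightarrow>
   ('a \<Rightarrow> nat \<Rightarrow> real) \<Rightarrow> ('a \<Rightarrow> nat \<Rightarrow> 'a) \<Rightarrow> nat \<Rightarrow> 'a \<Rightarrow> ((nat \<Rightarrow> real) \<times> (nat \<Rightarrow> real)) set" where
  "lagrange_multipliers df g dg m h dh k x =
     {(u, v). (\<forall>i\<ge>m. u i = 0) \<and> (\<forall>j\<ge>k. v j = 0) \<and>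
        df x + (\<Sum>i<m. u i *\<^sub>R dg x i) + (\<Sum>j<k. v j *\<^sub>R dh x j) = 0 \<and>
        (\<forall>i<m. g x i \<le> 0) \<and> (\<forall>j<k. h x j = 0) \<and>
        (\<forall>i<m. u i \<ge> 0) \<and> (\<Sum>i<m. u i * g x i) = 0}"

definition X_KKT ::
  "('a::euclidean_space \<Rightarrow> 'a) \<Rightarrow> ('a \<Rightarrow> nat \<Rightarrow> real) \<Rightarrow> ('a \<Rightarrow> nat \<Rightarrow> 'a) \<Rightarrow> nat \<Rightarrow>
   ('a \<Rightarrow> nat \<Rightarrow> real) \<Rightarrow> ('a \<Rightarrow> nat \<Rightarrow> 'a) \<Rightarrow> nat \<Rightarrow> 'a set" where
  "X_KKT df g dg m h dh k = {x. lagrange_multipliers df g dg m h dh k x \<noteq> {}}"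

definition qp_feasible ::
  "real \<Rightarrow> ('a::euclidean_space \<Rightarrow> nat \<Rightarrow> real) \<Rightarrow> ('a \<Rightarrow> nat \<Rightarrow> 'a) \<Rightarrow> nat \<Rightarrow>
   ('a \<Rightarrow> nat \<Rightarrow> real) \<Rightarrow> ('a \<Rightarrow> nat \<Rightarrow> 'a) \<Rightarrow> nat \<Rightarrow> 'a \<Rightarrow> 'a set" where
  "qp_feasible \<alpha> g dg m h dh k x =
     {\<xi>. (\<forall>i<m. dg x i \<bullet> \<xi> \<le> - \<alpha> * g x i) \<and> (\<forall>j<k. dh x j \<bullet> \<xi> = - \<alpha> * h x j)}"

definition G_alpha ::
  "real \<Rightarrow> ('a::euclidean_space \<Rightarrow> 'a) \<Rightarrow> ('a \<Rightarrow> nat \<Rightarrow> real) \<Rightarrow> ('a \<Rightarrow> nat \<Rightarrow> 'a) \<Rightarrow> nat \<Rightarrow>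
   ('a \<Rightarrow> nat \<Rightarrow> real) \<Rightarrow> ('a \<Rightarrow> nat \<Rightarrow> 'a) \<Rightarrow> nat \<Rightarrow> 'a \<Rightarrow> 'a" where
  "G_alpha \<alpha> df g dg m h dh k x =
     (THE \<xi>. \<xi> \<in> qp_feasible \<alpha> g dg m h dh k x \<and>
        (\<forall>\<eta>\<in>qp_feasible \<alpha> g dg m h dh k x.
            (1/2) * (norm (\<xi> + df x))\<^sup>2 \<le> (1/2) * (norm (\<eta> + df x))\<^sup>2))"

definition Lambda_alpha ::
  "real \<Rightarrow> ('a::euclidean_space \<Rightarrow> 'a) \<Rightarrow> ('a \<Rightarrow> nat \<Rightarrow> real) \<Rightarrow> ('a \<Rightarrow> nat \<Rightarrow> 'a) \<Rightarrow> nat \<Rightarrow>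
   ('a \<Rightarrow> nat \<Rightarrow> real) \<Rightarrow> ('a \<Rightarrow> nat \<Rightarrow> 'a) \<Rightarrow> nat \<Rightarrow> 'a \<Rightarrow> ((nat \<Rightarrow> real) \<times> (nat \<Rightarrow> real)) set" where
  "Lambda_alpha \<alpha> df g dg m h dh k x =
     {(u, v). (\<forall>i\<ge>m. u i = 0) \<and> (\<forall>j\<ge>k. v j = 0) \<and> (\<forall>i<m. u i \<ge> 0) \<and>
        (\<exists>\<xi>. \<xi> + df x + (\<Sum>i<m. u i *\<^sub>R dg x i) + (\<Sum>j<k. v j *\<^sub>R dh x j) = 0 \<and>
             (\<forall>i<m. dg x i \<bullet> \<xi> + \<alpha> * g x i \<le> 0) \<and>
             (\<forall>j<k. dh x j \<bullet> \<xi> + \<alpha> * h x j = 0) \<and>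
             (\<Sum>i<m. u i * (dg x i \<bullet> \<xi> + \<alpha> * g x i)) = 0)}"

end

theory Submission
  imports Defs
begin

(*
  At a feasible point x the constraint set P of the subproblem contains 0, and G_alpha(x) is the
  projection of -grad f(x) onto P. Hence G_alpha(x) = 0 iff grad f(x) . xi >= 0 on P. Near 0
  the polyhedron P coincides with the linearised cone at x, because inactive constraints have
  slack -alpha g_i(x) > 0; so by Farkas' lemma this variational inequality is exactly the
  existence of Lagrange multipliers. For (ii), a triple (u, v, xi) from Lambda_alpha(x) gives
  (xi + grad f(x)) . xi = alpha sum_i u_i g_i(x) <= 0, while grad f(x) . xi >= 0 at a KKT
  point; so xi = 0 and (u, v) is a multiplier.
*)

lemma closest_point_eq_0_iff:
  fixes S :: "'a::euclidean_space set"
  assumes "convex S" "closed S" "0 \<in> S"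
  shows "closest_point S a = 0 \<longleftrightarrow> (\<forall>x\<in>S. a \<bullet> x \<le> 0)"
proof
  assume "closest_point S a = 0"
  then show "\<forall>x\<in>S. a \<bullet> x \<le> 0"
    using closest_point_dot[OF assms(1,2), of _ a] by simp
next
  assume obtuse: "\<forall>x\<in>S. a \<bullet> x \<le> 0"
  have "dist a 0 \<le> dist a x" if "x \<in> S" for x
  proof -
    have expand: "(a - x) \<bullet> (a - x) = a \<bullet> a - 2 * (a \<bullet> x) + x \<bullet> x"
      by (simp add: inner_diff_left inner_diff_right inner_commute)
    have "a \<bullet> x \<le> 0"
      using obtuse that by blast
    then have "a \<bullet> a \<le> (a - x) \<bullet> (a - x)"
      unfolding expand using inner_ge_zero[of x] by linarith
    then show ?thesis by (simp add: dist_norm norm_le)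
  qed
  then show "closest_point S a = 0"
    using closest_point_unique[OF assms] by simp
qed

lemma convex_cone_hull_image_subset:
  fixes w :: "'i \<Rightarrow> 'a::real_vector"
  assumes "finite J"
  shows "convex_cone hull (w ` J) \<subseteq> (\<lambda>\<mu>. \<Sum>j\<in>J. \<mu> j *\<^sub>R w j) ` {\<mu>. \<forall>j\<in>J. 0 \<le> \<mu> j}"
proof (rule hull_minimal)
  show "w ` J \<subseteq> (\<lambda>\<mu>. \<Sum>j\<in>J. \<mu> j *\<^sub>R w j) ` {\<mu>. \<forall>j\<in>J. 0 \<le> \<mu> j}"
  proof (clarsimp simp: image_iff)
    fix l assume "l \<in> J"
    have "w l = (\<Sum>j\<in>J. if j = l then w j else 0)"
      using \<open>l \<in> J\<close> assms by simp
    also have "\<dots> = (\<Sum>j\<in>J. (if j = l then 1 else 0) *\<^sub>R w j)"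
      by (intro sum.cong) auto
    finally have "w l = (\<Sum>j\<in>J. (if j = l then 1 else 0) *\<^sub>R w j)" .
    then show "\<exists>\<mu>. (\<forall>j\<in>J. 0 \<le> \<mu> j) \<and> w l = (\<Sum>j\<in>J. \<mu> j *\<^sub>R w j)"
      by (intro exI[of _ "\<lambda>j. if j = l then 1 else 0"]) auto
  qed
  let ?R = "(\<lambda>\<mu>. \<Sum>j\<in>J. \<mu> j *\<^sub>R w j) ` {\<mu>. \<forall>j\<in>J. 0 \<le> \<mu> j}"
  have "0 \<in> ?R"
    by (rule image_eqI[of _ _ "\<lambda>_. 0"]) auto
  moreover have "x + y \<in> ?R" if "x \<in> ?R" "y \<in> ?R" for x y
  proof -
    from that obtain \<mu> \<nu> where "\<forall>j\<in>J. 0 \<le> \<mu> j" "\<forall>j\<in>J. 0 \<le> \<nu> j"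
      and "x = (\<Sum>j\<in>J. \<mu> j *\<^sub>R w j)" "y = (\<Sum>j\<in>J. \<nu> j *\<^sub>R w j)" by blast
    then show ?thesis
      by (intro image_eqI[of _ _ "\<lambda>j. \<mu> j + \<nu> j"]) (auto simp: sum.distrib scaleR_add_left)
  qed
  moreover have "c *\<^sub>R x \<in> ?R" if "x \<in> ?R" "0 \<le> c" for x c
  proof -
    from that obtain \<mu> where "\<forall>j\<in>J. 0 \<le> \<mu> j" "x = (\<Sum>j\<in>J. \<mu> j *\<^sub>R w j)" by blast
    with \<open>0 \<le> c\<close> show ?thesis
      by (intro image_eqI[of _ _ "\<lambda>j. c * \<mu> j"]) (auto simp: scaleR_sum_right)
  qed
  ultimately show "convex_cone ?R"
    unfolding convex_cone_iff by blast
qed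

lemma farkas_lemma:
  fixes w :: "'i \<Rightarrow> 'a::euclidean_space"
  assumes "finite J" and polar: "\<And>d. \<forall>j\<in>J. w j \<bullet> d \<le> 0 \<Longrightarrow> y \<bullet> d \<le> 0"
  shows "\<exists>\<mu>. (\<forall>j\<in>J. 0 \<le> \<mu> j) \<and> y = (\<Sum>j\<in>J. \<mu> j *\<^sub>R w j)"
proof -
  let ?C = "convex_cone hull (w ` J)"
  have "y \<in> ?C"
  proof (rule ccontr)
    assume "y \<notin> ?C"
    then obtain a b where ay: "a \<bullet> y < b" and aC: "\<forall>x\<in>?C. b < a \<bullet> x"
      using separating_hyperplane_closed_point[OF convex_convex_cone_hull
          closed_convex_cone_hull[OF finite_imageI[OF \<open>finite J\<close>]]] by blast
    have "b < 0"
      using aC convex_cone_hull_contains_0 by fastforce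
    have "0 \<le> a \<bullet> w j" if "j \<in> J" for j
    proof (rule ccontr)
      assume neg: "\<not> 0 \<le> a \<bullet> w j"
      have "(b / (a \<bullet> w j)) *\<^sub>R w j \<in> ?C"
        using \<open>b < 0\<close> neg that
        by (intro convex_cone_hull_mul hull_inc) (auto simp: divide_nonpos_neg less_imp_le)
      with aC neg show False by fastforce
    qed
    then have "y \<bullet> (- a) \<le> 0"
      by (intro polar) (simp add: inner_commute)
    with ay \<open>b < 0\<close> show False by (simp add: inner_commute)
  qed
  then show ?thesis
    using convex_cone_hull_image_subset[OF \<open>finite J\<close>, of w] by blast
qed

lemma farkas_lemma_mixed:
  fixes a :: "'i \<Rightarrow> 'a::euclidean_space" and b :: "'j \<Rightarrow> 'a"
  assumes "finite I" "finite K"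
    and polar: "\<And>d. \<forall>i\<in>I. a i \<bullet> d \<le> 0 \<Longrightarrow> \<forall>j\<in>K. b j \<bullet> d = 0 \<Longrightarrow> y \<bullet> d \<le> 0"
  shows "\<exists>u v. (\<forall>i\<in>I. 0 \<le> u i) \<and> y = (\<Sum>i\<in>I. u i *\<^sub>R a i) + (\<Sum>j\<in>K. v j *\<^sub>R b j)"
proof -
  define w where "w = case_sum a (case_sum b (\<lambda>j. - b j))"
  have "\<exists>\<mu>. (\<forall>l\<in>I <+> (K <+> K). 0 \<le> \<mu> l) \<and> y = (\<Sum>l\<in>I <+> (K <+> K). \<mu> l *\<^sub>R w l)"
  proof (rule farkas_lemma)
    show "finite (I <+> (K <+> K))"
      using assms by simp
    fix d assume w_polar: "\<forall>l\<in>I <+> (K <+> K). w l \<bullet> d \<le> 0"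
    have "a i \<bullet> d \<le> 0" if "i \<in> I" for i
      using w_polar[rule_format, OF InlI[OF that]] by (simp add: w_def)
    moreover have "b j \<bullet> d = 0" if "j \<in> K" for j
      using w_polar[rule_format, OF InrI[OF InlI[OF that]]] w_polar[rule_format, OF InrI[OF InrI[OF that]]]
      by (simp add: w_def)
    ultimately show "y \<bullet> d \<le> 0"
      by (intro polar) auto
  qed
  then obtain \<mu> where \<mu>: "\<forall>l\<in>I <+> (K <+> K). 0 \<le> \<mu> l"
    and y_eq: "y = (\<Sum>l\<in>I <+> (K <+> K). \<mu> l *\<^sub>R w l)" by blast
  have "y = (\<Sum>i\<in>I. \<mu> (Inl i) *\<^sub>R a i)
      + ((\<Sum>j\<in>K. \<mu> (Inr (Inl j)) *\<^sub>R b j) + (\<Sum>j\<in>K. \<mu> (Inr (Inr j)) *\<^sub>R - b j))"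
    using y_eq assms(1,2) by (simp add: w_def sum.Plus comp_def)
  also have "\<dots> = (\<Sum>i\<in>I. \<mu> (Inl i) *\<^sub>R a i)
      + (\<Sum>j\<in>K. (\<mu> (Inr (Inl j)) - \<mu> (Inr (Inr j))) *\<^sub>R b j)"
    by (simp add: scaleR_diff_left sum_subtractf sum_negf)
  finally have "y = (\<Sum>i\<in>I. \<mu> (Inl i) *\<^sub>R a i)
      + (\<Sum>j\<in>K. (\<mu> (Inr (Inl j)) - \<mu> (Inr (Inr j))) *\<^sub>R b j)" .
  moreover have "\<forall>i\<in>I. 0 \<le> \<mu> (Inl i)"
    using \<mu> by blast
  ultimately show ?thesis
    by (intro exI[of _ "\<lambda>i. \<mu> (Inl i)"] exI[of _ "\<lambda>j. \<mu> (Inr (Inl j)) - \<mu> (Inr (Inr j))"] conjI)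
qed

lemma inner_eq_multiplier_sums:
  assumes "w + (\<Sum>i<m. u i *\<^sub>R a i) + (\<Sum>j<k. v j *\<^sub>R b j) = 0"
  shows "w \<bullet> \<eta> = - (\<Sum>i<m. u i * (a i \<bullet> \<eta>)) - (\<Sum>j<k. v j * (b j \<bullet> \<eta>))"
proof -
  have "w = - (\<Sum>i<m. u i *\<^sub>R a i) - (\<Sum>j<k. v j *\<^sub>R b j)"
    using assms by (simp add: algebra_simps eq_neg_iff_add_eq_0)
  then show ?thesis
    by (simp add: inner_diff_left inner_sum_left)
qed

lemma closed_qp_feasible: "closed (qp_feasible \<alpha> g dg m h dh k x)"
  and convex_qp_feasible: "convex (qp_feasible \<alpha> g dg m h dh k x)"
proof -
  have P: "qp_feasible \<alpha> g dg m h dh k x =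
      (\<Inter>i<m. {\<xi>. dg x i \<bullet> \<xi> \<le> - \<alpha> * g x i}) \<inter> (\<Inter>j<k. {\<xi>. dh x j \<bullet> \<xi> = - \<alpha> * h x j})"
    by (auto simp: qp_feasible_def)
  show "closed (qp_feasible \<alpha> g dg m h dh k x)"
    unfolding P by (intro closed_Int closed_INT ballI closed_halfspace_le closed_hyperplane)
  show "convex (qp_feasible \<alpha> g dg m h dh k x)"
    unfolding P by (intro convex_Int convex_INT ballI convex_halfspace_le convex_hyperplane)
qed

lemma zero_in_qp_feasible:
  assumes "x \<in> feasible_set g m h k" "0 \<le> \<alpha>"
  shows "0 \<in> qp_feasible \<alpha> g dg m h dh k x"
  using assms by (auto simp: feasible_set_def qp_feasible_def mult_nonneg_nonpos)

lemma G_alpha_eq_closest_point: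
  assumes "qp_feasible \<alpha> g dg m h dh k x \<noteq> {}"
  shows "G_alpha \<alpha> df g dg m h dh k x = closest_point (qp_feasible \<alpha> g dg m h dh k x) (- df x)"
proof -
  let ?P = "qp_feasible \<alpha> g dg m h dh k x"
  have objective: "(1/2) * (norm (\<xi> + df x))\<^sup>2 \<le> (1/2) * (norm (\<eta> + df x))\<^sup>2
      \<longleftrightarrow> dist (- df x) \<xi> \<le> dist (- df x) \<eta>" for \<xi> \<eta>
    by (simp add: dist_norm norm_minus_commute add.commute)
  show ?thesis
    unfolding G_alpha_def objective
  proof (rule the_equality)
    show "closest_point ?P (- df x) \<in> ?P \<and>
        (\<forall>\<eta>\<in>?P. dist (- df x) (closest_point ?P (- df x)) \<le> dist (- df x) \<eta>)"
      using closest_point_exists[OF closed_qp_feasible assms] by blast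
  next
    fix \<xi> assume "\<xi> \<in> ?P \<and> (\<forall>\<eta>\<in>?P. dist (- df x) \<xi> \<le> dist (- df x) \<eta>)"
    then show "\<xi> = closest_point ?P (- df x)"
      using closest_point_unique[OF convex_qp_feasible closed_qp_feasible] by blast
  qed
qed

lemma nonneg_inner_if_lagrange_multipliers:
  assumes "(u, v) \<in> lagrange_multipliers df g dg m h dh k x"
    and "\<eta> \<in> qp_feasible \<alpha> g dg m h dh k x" and "0 \<le> \<alpha>"
  shows "0 \<le> df x \<bullet> \<eta>"
proof -
  from assms(1) have stat: "df x + (\<Sum>i<m. u i *\<^sub>R dg x i) + (\<Sum>j<k. v j *\<^sub>R dh x j) = 0"
    and "\<forall>j<k. h x j = 0" "\<forall>i<m. 0 \<le> u i" "(\<Sum>i<m. u i * g x i) = 0"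
    unfolding lagrange_multipliers_def by auto
  have eq_part: "(\<Sum>j<k. v j * (dh x j \<bullet> \<eta>)) = 0"
    using assms(2) \<open>\<forall>j<k. h x j = 0\<close> by (simp add: qp_feasible_def)
  have "(\<Sum>i<m. u i * (dg x i \<bullet> \<eta>)) \<le> (\<Sum>i<m. u i * (- \<alpha> * g x i))"
    using assms(2) \<open>\<forall>i<m. 0 \<le> u i\<close>
    by (intro sum_mono mult_left_mono) (auto simp: qp_feasible_def)
  also have "\<dots> = - \<alpha> * (\<Sum>i<m. u i * g x i)"
    by (simp add: sum_distrib_left algebra_simps)
  also have "\<dots> = 0"
    using \<open>(\<Sum>i<m. u i * g x i) = 0\<close> by simp
  finally show ?thesis
    using inner_eq_multiplier_sums[OF stat, of \<eta>] eq_part by linarith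
qed

lemma scaled_direction_in_qp_feasible:
  assumes "0 < \<alpha>" and x: "x \<in> feasible_set g m h k"
    and active: "\<forall>i\<in>active_set g m x. dg x i \<bullet> d \<le> 0" and eq: "\<forall>j<k. dh x j \<bullet> d = 0"
  shows "\<exists>t>0. t *\<^sub>R d \<in> qp_feasible \<alpha> g dg m h dh k x"
proof -
  let ?A = "active_set g m x"
  have "\<forall>\<^sub>F t in at_right 0. \<forall>i\<in>{..<m} - ?A. t * (dg x i \<bullet> d) < - \<alpha> * g x i"
  proof (rule eventually_ball_finite[OF finite_Diff[OF finite_lessThan]], rule ballI)
    fix i assume "i \<in> {..<m} - ?A"
    then have "g x i < 0"
      using x by (auto simp: feasible_set_def active_set_def less_le)
    then have "0 * (dg x i \<bullet> d) < - \<alpha> * g x i"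
      using \<open>0 < \<alpha>\<close> by (simp add: mult_pos_neg)
    moreover have "((\<lambda>t. t * (dg x i \<bullet> d)) \<longlongrightarrow> 0 * (dg x i \<bullet> d)) (at_right 0)"
      by (intro tendsto_intros)
    ultimately show "\<forall>\<^sub>F t in at_right 0. t * (dg x i \<bullet> d) < - \<alpha> * g x i"
      by (rule order_tendstoD(2)[rotated])
  qed
  with eventually_at_right_less
  have "\<forall>\<^sub>F t in at_right 0. 0 < t \<and> (\<forall>i\<in>{..<m} - ?A. t * (dg x i \<bullet> d) < - \<alpha> * g x i)"
    by (rule eventually_conj)
  then obtain t where t: "0 < t" and slack: "\<forall>i\<in>{..<m} - ?A. t * (dg x i \<bullet> d) < - \<alpha> * g x i"
    using eventually_happens'[of "at_right (0::real)"] by auto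
  have "dg x i \<bullet> t *\<^sub>R d \<le> - \<alpha> * g x i" if "i < m" for i
  proof (cases "i \<in> ?A")
    case True
    then show ?thesis
      using active t by (simp add: active_set_def mult_nonneg_nonpos)
  next
    case False
    then show ?thesis
      using slack that by (simp add: less_imp_le)
  qed
  moreover have "dh x j \<bullet> t *\<^sub>R d = - \<alpha> * h x j" if "j < k" for j
    using eq x that by (simp add: feasible_set_def)
  ultimately show ?thesis
    using t by (auto simp: qp_feasible_def)
qed

lemma X_KKT_if_nonneg_inner:
  assumes "0 < \<alpha>" and x: "x \<in> feasible_set g m h k"
    and nonneg: "\<forall>\<eta>\<in>qp_feasible \<alpha> g dg m h dh k x. 0 \<le> df x \<bullet> \<eta>"
  shows "x \<in> X_KKT df g dg m h dh k"
proof -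
  let ?A = "active_set g m x"
  have "?A \<subseteq> {..<m}"
    by (auto simp: active_set_def)
  have "\<exists>u v. (\<forall>i\<in>?A. 0 \<le> u i) \<and>
      - df x = (\<Sum>i\<in>?A. u i *\<^sub>R dg x i) + (\<Sum>j\<in>{..<k}. v j *\<^sub>R dh x j)"
  proof (rule farkas_lemma_mixed)
    show "finite ?A"
      using \<open>?A \<subseteq> {..<m}\<close> finite_subset by blast
    fix d assume active: "\<forall>i\<in>?A. dg x i \<bullet> d \<le> 0" and "\<forall>j\<in>{..<k}. dh x j \<bullet> d = 0"
    then have "\<forall>j<k. dh x j \<bullet> d = 0"
      by simp
    then obtain t where "0 < t" "t *\<^sub>R d \<in> qp_feasible \<alpha> g dg m h dh k x"
      using scaled_direction_in_qp_feasible[where dg = dg and dh = dh, OF \<open>0 < \<alpha>\<close> x active] by blast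
    then have "0 \<le> t * (df x \<bullet> d)"
      using nonneg by auto
    with \<open>0 < t\<close> show "- df x \<bullet> d \<le> 0"
      by (simp add: zero_le_mult_iff)
  qed simp
  then obtain u v where u: "\<forall>i\<in>?A. 0 \<le> u i"
    and uv: "- df x = (\<Sum>i\<in>?A. u i *\<^sub>R dg x i) + (\<Sum>j<k. v j *\<^sub>R dh x j)" by auto
  define u' where "u' i = (if i \<in> ?A then u i else 0)" for i
  define v' where "v' j = (if j < k then v j else 0)" for j
  have "(\<Sum>i<m. u' i *\<^sub>R dg x i) = (\<Sum>i\<in>?A. u i *\<^sub>R dg x i)"
    using \<open>?A \<subseteq> {..<m}\<close> by (intro sum.mono_neutral_cong_right) (auto simp: u'_def)
  moreover have "(\<Sum>j<k. v' j *\<^sub>R dh x j) = (\<Sum>j<k. v j *\<^sub>R dh x j)"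
    by (intro sum.cong) (auto simp: v'_def)
  moreover have "(\<Sum>i<m. u' i * g x i) = 0"
    by (intro sum.neutral) (auto simp: u'_def active_set_def)
  moreover have "df x + (\<Sum>i\<in>?A. u i *\<^sub>R dg x i) + (\<Sum>j<k. v j *\<^sub>R dh x j) = 0"
    using uv by (metis add.assoc neg_eq_iff_add_eq_0)
  ultimately have "(u', v') \<in> lagrange_multipliers df g dg m h dh k x"
    using u x \<open>?A \<subseteq> {..<m}\<close>
    by (auto simp: lagrange_multipliers_def feasible_set_def u'_def v'_def)
  then show ?thesis
    unfolding X_KKT_def by blast
qed

lemma G_alpha_eq_0_iff_X_KKT:
  assumes "0 < \<alpha>" and x: "x \<in> feasible_set g m h k"
  shows "G_alpha \<alpha> df g dg m h dh k x = 0 \<longleftrightarrow> x \<in> X_KKT df g dg m h dh k"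
proof -
  let ?P = "qp_feasible \<alpha> g dg m h dh k x"
  have "0 \<in> ?P"
    using zero_in_qp_feasible[OF x] \<open>0 < \<alpha>\<close> by simp
  then have "G_alpha \<alpha> df g dg m h dh k x = closest_point ?P (- df x)"
    by (intro G_alpha_eq_closest_point) blast
  then have "G_alpha \<alpha> df g dg m h dh k x = 0 \<longleftrightarrow> closest_point ?P (- df x) = 0"
    by simp
  also have "\<dots> \<longleftrightarrow> (\<forall>\<eta>\<in>?P. - df x \<bullet> \<eta> \<le> 0)"
    by (rule closest_point_eq_0_iff[OF convex_qp_feasible closed_qp_feasible \<open>0 \<in> ?P\<close>])
  also have "\<dots> \<longleftrightarrow> x \<in> X_KKT df g dg m h dh k"
  proof
    assume "\<forall>\<eta>\<in>?P. - df x \<bullet> \<eta> \<le> 0"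
    then show "x \<in> X_KKT df g dg m h dh k"
      by (intro X_KKT_if_nonneg_inner[OF \<open>0 < \<alpha>\<close> x]) auto
  next
    assume "x \<in> X_KKT df g dg m h dh k"
    then obtain u v where "(u, v) \<in> lagrange_multipliers df g dg m h dh k x"
      unfolding X_KKT_def by auto
    then show "\<forall>\<eta>\<in>?P. - df x \<bullet> \<eta> \<le> 0"
      using nonneg_inner_if_lagrange_multipliers \<open>0 < \<alpha>\<close> by fastforce
  qed
  finally show ?thesis .
qed

lemma lagrange_multipliers_subset_Lambda_alpha:
  assumes "0 \<le> \<alpha>"
  shows "lagrange_multipliers df g dg m h dh k x \<subseteq> Lambda_alpha \<alpha> df g dg m h dh k x"
proof clarify
  fix u v assume "(u, v) \<in> lagrange_multipliers df g dg m h dh k x"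
  then have "\<forall>i\<ge>m. u i = 0" "\<forall>j\<ge>k. v j = 0" "\<forall>i<m. 0 \<le> u i"
    and stat: "df x + (\<Sum>i<m. u i *\<^sub>R dg x i) + (\<Sum>j<k. v j *\<^sub>R dh x j) = 0"
    and g: "\<forall>i<m. g x i \<le> 0" and h: "\<forall>j<k. h x j = 0" and compl: "(\<Sum>i<m. u i * g x i) = 0"
    by (simp_all add: lagrange_multipliers_def)
  moreover have "0 + df x + (\<Sum>i<m. u i *\<^sub>R dg x i) + (\<Sum>j<k. v j *\<^sub>R dh x j) = 0"
    using stat by simp
  moreover have "\<forall>i<m. dg x i \<bullet> 0 + \<alpha> * g x i \<le> 0"
    using g assms by (simp add: mult_nonneg_nonpos)
  moreover have "\<forall>j<k. dh x j \<bullet> 0 + \<alpha> * h x j = 0"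
    using h by simp
  moreover have "(\<Sum>i<m. u i * (dg x i \<bullet> 0 + \<alpha> * g x i)) = \<alpha> * (\<Sum>i<m. u i * g x i)"
    by (simp add: sum_distrib_left mult.left_commute)
  ultimately show "(u, v) \<in> Lambda_alpha \<alpha> df g dg m h dh k x"
    unfolding Lambda_alpha_def using compl by (auto intro!: exI[of _ 0])
qed

lemma Lambda_alpha_subset_lagrange_multipliers:
  assumes "0 < \<alpha>" and x: "x \<in> feasible_set g m h k"
    and nonneg: "\<forall>\<eta>\<in>qp_feasible \<alpha> g dg m h dh k x. 0 \<le> df x \<bullet> \<eta>"
  shows "Lambda_alpha \<alpha> df g dg m h dh k x \<subseteq> lagrange_multipliers df g dg m h dh k x"
proof clarify
  fix u v assume "(u, v) \<in> Lambda_alpha \<alpha> df g dg m h dh k x"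
  then have "\<forall>i\<ge>m. u i = 0" "\<forall>j\<ge>k. v j = 0" and u: "\<forall>i<m. 0 \<le> u i"
    and "\<exists>\<xi>. \<xi> + df x + (\<Sum>i<m. u i *\<^sub>R dg x i) + (\<Sum>j<k. v j *\<^sub>R dh x j) = 0 \<and>
      (\<forall>i<m. dg x i \<bullet> \<xi> + \<alpha> * g x i \<le> 0) \<and> (\<forall>j<k. dh x j \<bullet> \<xi> + \<alpha> * h x j = 0) \<and>
      (\<Sum>i<m. u i * (dg x i \<bullet> \<xi> + \<alpha> * g x i)) = 0"
    by (simp_all add: Lambda_alpha_def)
  then obtain \<xi> where stat: "\<xi> + df x + (\<Sum>i<m. u i *\<^sub>R dg x i) + (\<Sum>j<k. v j *\<^sub>R dh x j) = 0"
    and ineq: "\<forall>i<m. dg x i \<bullet> \<xi> + \<alpha> * g x i \<le> 0" and eq: "\<forall>j<k. dh x j \<bullet> \<xi> + \<alpha> * h x j = 0"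
    and compl: "(\<Sum>i<m. u i * (dg x i \<bullet> \<xi> + \<alpha> * g x i)) = 0"
    by blast
  from x have g: "\<forall>i<m. g x i \<le> 0" and h: "\<forall>j<k. h x j = 0"
    by (auto simp: feasible_set_def)
  have "\<xi> \<in> qp_feasible \<alpha> g dg m h dh k x"
    using ineq eq by (auto simp: qp_feasible_def algebra_simps)
  then have "0 \<le> df x \<bullet> \<xi>"
    using nonneg by blast
  have "(\<Sum>j<k. v j * (dh x j \<bullet> \<xi>)) = 0"
    using eq h by simp
  moreover have "(\<Sum>i<m. u i * (dg x i \<bullet> \<xi>)) + \<alpha> * (\<Sum>i<m. u i * g x i) = 0"
    using compl by (simp add: sum_distrib_left distrib_left sum.distrib mult.left_commute)
  ultimately have "(\<xi> + df x) \<bullet> \<xi> = \<alpha> * (\<Sum>i<m. u i * g x i)"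
    using inner_eq_multiplier_sums[OF stat, of \<xi>] by linarith
  also have "\<dots> \<le> 0"
    using \<open>0 < \<alpha>\<close> u g by (intro mult_nonneg_nonpos sum_nonpos) (auto intro: mult_nonneg_nonpos)
  finally have "\<xi> \<bullet> \<xi> \<le> - (df x \<bullet> \<xi>)"
    by (simp add: inner_add_left)
  with \<open>0 \<le> df x \<bullet> \<xi>\<close> have "\<xi> \<bullet> \<xi> \<le> 0"
    by linarith
  then have "\<xi> = 0"
    by (metis inner_gt_zero_iff not_le)
  with compl \<open>0 < \<alpha>\<close> have "(\<Sum>i<m. u i * g x i) = 0"
    by (simp add: sum_distrib_left[symmetric] mult.left_commute)
  with \<open>\<xi> = 0\<close> stat g h u \<open>\<forall>i\<ge>m. u i = 0\<close> \<open>\<forall>j\<ge>k. v j = 0\<close>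
  show "(u, v) \<in> lagrange_multipliers df g dg m h dh k x"
    by (simp add: lagrange_multipliers_def)
qed

lemma Lambda_alpha_eq_lagrange_multipliers:
  assumes "0 < \<alpha>" and x: "x \<in> feasible_set g m h k" and "x \<in> X_KKT df g dg m h dh k"
  shows "Lambda_alpha \<alpha> df g dg m h dh k x = lagrange_multipliers df g dg m h dh k x"
proof
  obtain u v where "(u, v) \<in> lagrange_multipliers df g dg m h dh k x"
    using \<open>x \<in> X_KKT df g dg m h dh k\<close> unfolding X_KKT_def by auto
  then have "\<forall>\<eta>\<in>qp_feasible \<alpha> g dg m h dh k x. 0 \<le> df x \<bullet> \<eta>"
    using nonneg_inner_if_lagrange_multipliers \<open>0 < \<alpha>\<close> by fastforce
  then show "Lambda_alpha \<alpha> df g dg m h dh k x \<subseteq> lagrange_multipliers df g dg m h dh k x"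
    by (rule Lambda_alpha_subset_lagrange_multipliers[OF \<open>0 < \<alpha>\<close> x])
  show "lagrange_multipliers df g dg m h dh k x \<subseteq> Lambda_alpha \<alpha> df g dg m h dh k x"
    using \<open>0 < \<alpha>\<close> by (intro lagrange_multipliers_subset_Lambda_alpha) simp
qed

theorem mainTheorem7:
  fixes f :: "real^'n \<Rightarrow> real" and df :: "real^'n \<Rightarrow> real^'n"
    and g :: "real^'n \<Rightarrow> nat \<Rightarrow> real" and dg :: "real^'n \<Rightarrow> nat \<Rightarrow> real^'n"
    and h :: "real^'n \<Rightarrow> nat \<Rightarrow> real" and dh :: "real^'n \<Rightarrow> nat \<Rightarrow> real^'n"
    and m k :: nat and \<alpha> :: real and xs :: "real^'n"
  assumes f_C1: "\<forall>x. (f has_derivative (\<lambda>d. df x \<bullet> d)) (at x)" "continuous_on UNIV df"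
    and g_C1: "\<forall>i<m. \<forall>x. ((\<lambda>y. g y i) has_derivative (\<lambda>d. dg x i \<bullet> d)) (at x)"
              "\<forall>i<m. continuous_on UNIV (\<lambda>x. dg x i)"
    and h_C1: "\<forall>j<k. \<forall>x. ((\<lambda>y. h y j) has_derivative (\<lambda>d. dh x j \<bullet> d)) (at x)"
              "\<forall>j<k. continuous_on UNIV (\<lambda>x. dh x j)"
    and alpha_pos: "\<alpha> > 0"
    and xs_feas: "xs \<in> feasible_set g m h k"
    and mfcq: "MFCQ g dg m dh k xs"
  shows "(G_alpha \<alpha> df g dg m h dh k xs = 0 \<longleftrightarrow> xs \<in> X_KKT df g dg m h dh k)
       \<and> (xs \<in> X_KKT df g dg m h dh k \<longrightarrow>
            Lambda_alpha \<alpha> df g dg m h dh k xs = lagrange_multipliers df g dg m h dh k xs)"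
  \<comment> \<open>The subproblem is posed over a polyhedron.\<close>
  using G_alpha_eq_0_iff_X_KKT[OF alpha_pos xs_feas]
    Lambda_alpha_eq_lagrange_multipliers[OF alpha_pos xs_feas]
  by blast

end
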